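(* A C*-algebra $A$ possesses a quasi-identity if and only if $A$ is unital. In this case, the identity is the only quasi-identity of $A$.
   Context: A quasi-identity of a ring $R$ is an element $e\in R$ with $r=er+re-ere$ for all $r\in R$. *)

theory Defs
  imports "HOL-Analysis.Analysis"
begin

definition cstar_algebra ::
  "(complex \<Rightarrow> 'a::{real_normed_algebra,banach} \<Rightarrow> 'a) \<Rightarrow> ('a \<Rightarrow> 'a) \<Rightarrow> bool" where
  "cstar_algebra scaleC star \<longleftrightarrow>
     (\<forall>a x y. scaleC a (x + y) = scaleC a x + scaleC a y) \<and>
     (\<forall>a b x. scaleC (a + b) x = scaleC a x + scaleC b x) \<and>
     (\<forall>a b x. scaleC a (scaleC b x) = scaleC (a * b) x) \<and>
     (\<forall>x. scaleC 1 x = x) \<and>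
     (\<forall>r x. scaleC (complex_of_real r) x = scaleR r x) \<and>
     (\<forall>a x. norm (scaleC a x) = cmod a * norm x) \<and>
     (\<forall>a x y. scaleC a (x * y) = scaleC a x * y) \<and>
     (\<forall>a x y. scaleC a (x * y) = x * scaleC a y) \<and>
     (\<forall>x. star (star x) = x) \<and>
     (\<forall>x y. star (x + y) = star x + star y) \<and>
     (\<forall>a x. star (scaleC a x) = scaleC (cnj a) (star x)) \<and>
     (\<forall>x y. star (x * y) = star y * star x) \<and>
     (\<forall>x. norm (star x * x) = (norm x)\<^sup>2)"

definition quasi_identity :: "'a::ring \<Rightarrow> bool" where
  "quasi_identity e \<longleftrightarrow> (\<forall>r. r = e * r + r * e - e * r * e)"

definition is_identity :: "'a::ring \<Rightarrow> bool" where
  "is_identity u \<longleftrightarrow> (\<forall>x. u * x = x \<and> x * u = x)"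

definition unital :: "'a::ring itself \<Rightarrow> bool" where
  "unital _ \<longleftrightarrow> (\<exists>u::'a. is_identity u)"

end

theory Submission
  imports Defs
begin

(* A quasi-identity e satisfies (x - e x) y (x - e x) = 0 and (x - x e) y (x - x e) = 0
   for all x, y, so in a semiprime ring it is a two-sided identity. A C*-algebra is semiprime:
   if c c* c = 0, the C*-identity applied to c and to the self-adjoint element c* c gives
   |c|^4 = |c* c|^2 = |c* c c* c| = 0. *)

definition semiprime :: "'a::ring itself \<Rightarrow> bool" where
  "semiprime _ \<longleftrightarrow> (\<forall>c::'a. (\<forall>y. c * y * c = 0) \<longrightarrow> c = 0)"

lemma quasi_identity_sandwich_left:
  fixes e :: "'a::ring"
  assumes "quasi_identity e"
  shows "(x - e * x) * y * (x - e * x) = 0"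
proof -
  define w where "w = x * y"
  have "(x - e * x) * y * (x - e * x) = (w - (e * w + w * e - e * w * e)) * x"
    unfolding w_def by (simp add: algebra_simps)
  then show ?thesis
    using assms unfolding quasi_identity_def by (metis diff_self mult_zero_left)
qed

lemma quasi_identity_sandwich_right:
  fixes e :: "'a::ring"
  assumes "quasi_identity e"
  shows "(x - x * e) * y * (x - x * e) = 0"
proof -
  define w where "w = y * x"
  have "(x - x * e) * y * (x - x * e) = x * (w - (e * w + w * e - e * w * e))"
    unfolding w_def by (simp add: algebra_simps)
  then show ?thesis
    using assms unfolding quasi_identity_def by (metis diff_self mult_zero_right)
qed

lemma semiprime_quasi_identity_is_identity:
  fixes e :: "'a::ring"
  assumes "semiprime TYPE('a)" and "quasi_identity e"
  shows "is_identity e"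
  unfolding is_identity_def
proof (intro allI conjI)
  fix x :: 'a
  show "e * x = x"
    using assms quasi_identity_sandwich_left[of e x] unfolding semiprime_def
    by (metis eq_iff_diff_eq_0)
  show "x * e = x"
    using assms quasi_identity_sandwich_right[of e x] unfolding semiprime_def
    by (metis eq_iff_diff_eq_0)
qed

lemma cstar_identity_cube_eq_zero:
  fixes star :: "'a::real_normed_algebra \<Rightarrow> 'a"
  assumes star_star: "\<And>x. star (star x) = x"
    and star_mult: "\<And>x y. star (x * y) = star y * star x"
    and cstar_norm: "\<And>x. norm (star x * x) = (norm x)\<^sup>2"
    and cube: "c * star c * c = 0"
  shows "c = 0"
proof -
  let ?p = "star c * c"
  have "star ?p = ?p"
    using star_star star_mult by simp
  moreover have "?p * ?p = 0"
    using cube by (simp add: mult.assoc)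
  ultimately have "(norm ?p)\<^sup>2 = 0"
    using cstar_norm[of ?p] by simp
  then have "(norm c)\<^sup>2 = 0"
    using cstar_norm[of c] by simp
  then show ?thesis
    by simp
qed

lemma cstar_algebra_semiprime:
  fixes star :: "'a::{real_normed_algebra,banach} \<Rightarrow> 'a"
  assumes "cstar_algebra scaleC star"
  shows "semiprime TYPE('a)"
  unfolding semiprime_def
proof (intro allI impI)
  fix c :: 'a
  assume "\<forall>y. c * y * c = 0"
  then have "c * star c * c = 0"
    by blast
  with assms show "c = 0"
    unfolding cstar_algebra_def using cstar_identity_cube_eq_zero[of star c] by blast
qed

lemma is_identity_imp_quasi_identity:
  fixes u :: "'a::ring"
  assumes "is_identity u"
  shows "quasi_identity u"
  using assms unfolding is_identity_def quasi_identity_def by simp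

lemma is_identity_unique:
  fixes u v :: "'a::ring"
  assumes "is_identity u" and "is_identity v"
  shows "u = v"
  using assms unfolding is_identity_def by metis

theorem proposition4p5:
  fixes scaleC :: "complex \<Rightarrow> 'a::{real_normed_algebra,banach} \<Rightarrow> 'a"
    and star :: "'a \<Rightarrow> 'a"
  assumes "cstar_algebra scaleC star"
  shows "((\<exists>e::'a. quasi_identity e) \<longleftrightarrow> unital TYPE('a)) \<and>
         (\<forall>u e::'a. is_identity u \<longrightarrow> (quasi_identity e \<longleftrightarrow> e = u))"
proof -
  have "is_identity e" if "quasi_identity e" for e :: 'a
    using semiprime_quasi_identity_is_identity[OF cstar_algebra_semiprime[OF assms] that] .
  then show ?thesis
    using is_identity_imp_quasi_identity is_identity_unique unfolding unital_def by metis
qed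

end
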